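(* Let $G$ be a group and $H$ a subnormal subgroup of $G$. Then for every subgroup $K \leqslant G$ of finite index, $|HK:K|$ divides $|G:K|$.
   Context: For subgroups $H,K$ of a group $G$, $|HK:K|$ denotes the number of cosets of $K$ that intersect $H$ (equivalently $|H : H \cap K|$). $H$ is subnormal in $G$ if there is a finite chain $H = H_0 \lhd H_1 \lhd \dots \lhd H_r = G$. *)

theory Defs
  imports "HOL-Algebra.Algebra"
begin

inductive subnormal :: "('a, 'b) monoid_scheme \<Rightarrow> 'a set \<Rightarrow> bool"
  for G where
  subnormal_top: "subnormal G (carrier G)"
| subnormal_step: "subnormal G L \<Longrightarrow> subgroup L G \<Longrightarrow>
     normal H (G\<lparr>carrier := L\<rparr>) \<Longrightarrow> subnormal G H"

text \<open>|HK:K|: the number of (left) cosets of K that intersect H,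
  i.e. the number of cosets h K with h in H.\<close>
definition rel_index :: "('a, 'b) monoid_scheme \<Rightarrow> 'a set \<Rightarrow> 'a set \<Rightarrow> nat" where
  "rel_index G H K = card ((\<lambda>h. h <#\<^bsub>G\<^esub> K) ` H)"

end

theory Submission
  imports Defs
begin

text \<open>A subgroup \<open>H\<close> permutes the left cosets \<open>l K\<close>, \<open>l \<in> L\<close>, by left
  multiplication, and its orbits partition them. If \<open>H\<close> is normal in \<open>L\<close>, then
  \<open>H l = l H\<close>, so the orbit of \<open>l K\<close> is the translate by \<open>l\<close> of the orbit of
  \<open>K\<close>; all orbits thus have the size \<open>|HK:K|\<close> of the orbit of \<open>K\<close>, which therefore
  divides \<open>|LK:K|\<close>. Induction along a subnormal series gives \<open>|HK:K|\<close> dividing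
  the number of left cosets of \<open>K\<close>, which inversion identifies with the number
  of right cosets.\<close>

context group
begin

lemma image_inv_subgroup: "subgroup K G \<Longrightarrow> (\<lambda>k. inv k) ` K = K"
  by (force intro: image_eqI[of _ "\<lambda>k. inv k", OF inv_inv[symmetric]]
      simp: subgroup.m_inv_closed subgroup.mem_carrier)

lemma set_inv_l_coset:
  assumes K: "subgroup K G" and g: "g \<in> carrier G"
  shows "set_inv (g <# K) = K #> inv g"
proof -
  have "set_inv (g <# K) = (\<lambda>k. inv (g \<otimes> k)) ` K"
    unfolding SET_INV_def l_coset_def by blast
  also have "\<dots> = (\<lambda>k. k \<otimes> inv g) ` ((\<lambda>k. inv k) ` K)"
    using K g by (auto simp: image_image inv_mult_group subgroup.mem_carrier)
  finally show ?thesis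
    unfolding image_inv_subgroup[OF K] r_coset_def by blast
qed

lemma set_inv_set_inv: "M \<subseteq> carrier G \<Longrightarrow> set_inv (set_inv M) = M"
  unfolding SET_INV_def by (auto simp: subset_eq)

lemma card_lcosets_eq_card_rcosets:
  assumes K: "subgroup K G"
  shows "card (lcosets K) = card (rcosets K)"
proof (rule bij_betw_same_card)
  have "set_inv (set_inv M) = M" if "M \<in> lcosets K" for M
    using that l_coset_subset_G[OF subgroup.subset[OF K]] set_inv_set_inv
    unfolding LCOSETS_def by blast
  moreover have "(\<lambda>M. set_inv M) ` (lcosets K) = rcosets K"
  proof -
    have "K #> a \<in> (\<lambda>M. set_inv M) ` (lcosets K)" if "a \<in> carrier G" for a
    proof
      show "K #> a = set_inv (inv a <# K)"
        using that by (simp add: set_inv_l_coset[OF K])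
      show "inv a <# K \<in> lcosets K"
        using that unfolding LCOSETS_def by blast
    qed
    then show ?thesis
      unfolding RCOSETS_def by (auto simp: LCOSETS_def set_inv_l_coset[OF K])
  qed
  ultimately show "bij_betw (\<lambda>M. set_inv M) (lcosets K) (rcosets K)"
    by (metis bij_betw_imageI inj_on_inverseI)
qed

definition lmult_orbit :: "'a set \<Rightarrow> 'a set \<Rightarrow> 'a set set" where
  "lmult_orbit H C = (\<lambda>h. h <# C) ` H"

lemma lcosets_eq_lmult_orbit: "lcosets K = lmult_orbit (carrier G) K"
  unfolding LCOSETS_def lmult_orbit_def by blast

lemma lmult_orbit_r_coset:
  assumes "A \<subseteq> carrier G" "g \<in> carrier G" "C \<subseteq> carrier G"
  shows "(\<lambda>x. x <# C) ` (A #> g) = lmult_orbit A (g <# C)"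
proof -
  have coset_eq: "A #> g = (\<lambda>h. h \<otimes> g) ` A"
    unfolding r_coset_def by blast
  show ?thesis
    unfolding lmult_orbit_def image_image coset_eq
    using assms by (intro image_cong) (auto simp: lcos_m_assoc subset_eq)
qed

lemma lmult_orbit_l_coset:
  assumes "A \<subseteq> carrier G" "g \<in> carrier G" "C \<subseteq> carrier G"
  shows "(\<lambda>x. x <# C) ` (g <# A) = (\<lambda>D. g <# D) ` lmult_orbit A C"
proof -
  have coset_eq: "g <# A = (\<lambda>h. g \<otimes> h) ` A"
    unfolding l_coset_def by blast
  show ?thesis
    unfolding lmult_orbit_def image_image coset_eq
    using assms by (intro image_cong) (auto simp: lcos_m_assoc subset_eq)
qed

lemma lmult_orbit_self: "subgroup H G \<Longrightarrow> C \<subseteq> carrier G \<Longrightarrow> C \<in> lmult_orbit H C"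
  unfolding lmult_orbit_def by (metis image_eqI lcos_mult_one subgroup.one_closed)

lemma lmult_orbit_subset_Pow:
  "H \<subseteq> carrier G \<Longrightarrow> C \<subseteq> carrier G \<Longrightarrow> lmult_orbit H C \<subseteq> Pow (carrier G)"
  unfolding lmult_orbit_def using l_coset_subset_G by blast

lemma lmult_orbit_eq:
  assumes H: "subgroup H G" and C: "C \<subseteq> carrier G" and D: "D \<in> lmult_orbit H C"
  shows "lmult_orbit H D = lmult_orbit H C"
proof -
  obtain h where h: "h \<in> H" "D = h <# C"
    using D unfolding lmult_orbit_def by blast
  have "lmult_orbit H D = (\<lambda>x. x <# C) ` (H #> h)"
    using h H C by (simp add: lmult_orbit_r_coset subgroup.subset subgroup.mem_carrier)
  also have "H #> h = H"
    using h H by (simp add: coset_join2 subgroup.mem_carrier)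
  finally show ?thesis
    unfolding lmult_orbit_def .
qed

lemma inj_on_l_coset: "g \<in> carrier G \<Longrightarrow> inj_on (\<lambda>D. g <# D) (Pow (carrier G))"
  by (rule inj_on_inverseI[where g = "\<lambda>D. inv g <# D"])
    (simp add: lcos_m_assoc lcos_mult_one)

lemma r_coset_eq_l_coset_if_normal:
  assumes "normal H (G\<lparr>carrier := L\<rparr>)" and "l \<in> L"
  shows "H #> l = l <# H"
  using normal.coset_eq[OF assms(1)] assms(2) by (simp add: r_coset_def l_coset_def)

lemma card_lmult_orbit_l_coset:
  assumes L: "subgroup L G" and HL: "normal H (G\<lparr>carrier := L\<rparr>)"
    and l: "l \<in> L" and C: "C \<subseteq> carrier G"
  shows "card (lmult_orbit H (l <# C)) = card (lmult_orbit H C)"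
proof -
  have lG: "l \<in> carrier G" and HG: "H \<subseteq> carrier G"
    using l L HL subgroup.subset subgroup.mem_carrier normal_imp_subgroup incl_subgroup by blast+
  have "lmult_orbit H (l <# C) = (\<lambda>x. x <# C) ` (l <# H)"
    using lmult_orbit_r_coset[OF HG lG C] r_coset_eq_l_coset_if_normal[OF HL l] by simp
  also have "\<dots> = (\<lambda>D. l <# D) ` lmult_orbit H C"
    using lmult_orbit_l_coset[OF HG lG C] .
  finally show ?thesis
    using card_image inj_on_subset[OF inj_on_l_coset[OF lG] lmult_orbit_subset_Pow[OF HG C]]
    by simp
qed

lemma card_lmult_orbit_dvd_if_normal:
  assumes L: "subgroup L G" and HL: "normal H (G\<lparr>carrier := L\<rparr>)"
    and C: "C \<subseteq> carrier G" and fin: "finite (lmult_orbit L C)"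
  shows "card (lmult_orbit H C) dvd card (lmult_orbit L C)"
proof -
  have H: "subgroup H G"
    using incl_subgroup[OF L normal_imp_subgroup[OF HL]] .
  have "H \<subseteq> L"
    using subgroup.subset[OF normal_imp_subgroup[OF HL]] by simp
  let ?X = "lmult_orbit L C"
  let ?P = "lmult_orbit H ` ?X"
  have X_carrier: "D \<subseteq> carrier G" if "D \<in> ?X" for D
    using that lmult_orbit_subset_Pow[OF subgroup.subset[OF L] C] by blast
  have "\<Union> ?P = ?X"
  proof
    have "lmult_orbit H D \<subseteq> lmult_orbit L D" for D
      using \<open>H \<subseteq> L\<close> unfolding lmult_orbit_def by (rule image_mono)
    then show "\<Union> ?P \<subseteq> ?X"
      using lmult_orbit_eq[OF L C] by blast
    show "?X \<subseteq> \<Union> ?P"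
      using lmult_orbit_self[OF H] X_carrier by blast
  qed
  moreover have "card B = card (lmult_orbit H C)" if B_orbit: "B \<in> ?P" for B
  proof -
    obtain D where "D \<in> ?X" and B: "B = lmult_orbit H D"
      using B_orbit by blast
    then obtain l where "l \<in> L" "D = l <# C"
      unfolding lmult_orbit_def by blast
    then show ?thesis
      unfolding B
      using card_lmult_orbit_l_coset[OF L HL _ C] by simp
  qed
  moreover have "B1 \<inter> B2 = {}" if B: "B1 \<in> ?P" "B2 \<in> ?P" "B1 \<noteq> B2" for B1 B2
  proof (rule ccontr)
    obtain D1 D2 where D: "D1 \<in> ?X" "D2 \<in> ?X" "B1 = lmult_orbit H D1" "B2 = lmult_orbit H D2"
      using B(1,2) by blast
    assume "B1 \<inter> B2 \<noteq> {}"
    then obtain E where "E \<in> lmult_orbit H D1" "E \<in> lmult_orbit H D2"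
      using D by blast
    then have "B1 = lmult_orbit H E" "B2 = lmult_orbit H E"
      using lmult_orbit_eq[OF H] X_carrier D by metis+
    with B(3) show False by simp
  qed
  ultimately have "card (lmult_orbit H C) * card ?P = card ?X"
    using card_partition[of ?P] fin by simp
  then show ?thesis
    by (metis dvd_triv_left)
qed

lemma card_lmult_orbit_dvd_if_subnormal:
  assumes "subnormal G H" and C: "C \<subseteq> carrier G"
    and fin: "finite (lmult_orbit (carrier G) C)"
  shows "card (lmult_orbit H C) dvd card (lmult_orbit (carrier G) C)"
  using assms(1)
proof (induction rule: subnormal.induct)
  case subnormal_top
  show ?case by simp
next
  case (subnormal_step L H)
  have "finite (lmult_orbit L C)"
    using fin subgroup.subset[OF subnormal_step.hyps(2)]
    unfolding lmult_orbit_def by (meson finite_subset image_mono)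
  then have "card (lmult_orbit H C) dvd card (lmult_orbit L C)"
    using card_lmult_orbit_dvd_if_normal[OF subnormal_step.hyps(2,3) C] by blast
  then show ?case
    using subnormal_step.IH by (rule dvd_trans)
qed

end

theorem proposition1p3:
  fixes G (structure) and H K :: "'a set"
  assumes "group G"
    and "subnormal G H"
    and "subgroup K G"
    and "finite (rcosets K)"
  shows "rel_index G H K dvd card (rcosets K)"
proof -
  interpret group G by fact
  have card_eq: "card (lmult_orbit (carrier G) K) = card (rcosets K)"
    using card_lcosets_eq_card_rcosets[OF assms(3)] by (simp add: lcosets_eq_lmult_orbit)
  have "rcosets K \<noteq> {}"
    unfolding RCOSETS_def by blast
  then have "finite (lmult_orbit (carrier G) K)"
    using card_eq assms(4) card_gt_0_iff by (metis card.infinite)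
  then show ?thesis
    using card_lmult_orbit_dvd_if_subnormal[OF assms(2) subgroup.subset[OF assms(3)]] card_eq
    by (simp add: rel_index_def lmult_orbit_def)
qed

end
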